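(* Let $A,B\in \mathbb{R}^{m\times n}$ with $m<n$ and let $1\le p\le\infty$. Suppose $A = M_A - N_A$ with $M_A,N_A\in\mathbb{R}^{m\times n}$, $\operatorname{rank}(M_A) = m$, and $\|M_A^\dagger N_A\|_p+ \|M_A^\dagger B\|_p < 1.$ Then for any given $b\in\mathbb{R}^m$, the equation $x = M_A^\dagger\left(N_A x + B|x|+b\right)$ in $x\in\mathbb{R}^n$ has a unique solution, and that solution also satisfies the generalized absolute value equation $Ax-B|x|=b$.
   Context: $M^\dagger$ denotes the Moore–Penrose inverse of $M$. $|x|$ denotes the entrywise absolute value of $x\in\mathbb{R}^n$. $\|\cdot\|_p$ on matrices denotes the operator norm induced by the vector $p$-norm. *)

theory Defs
  imports "HOL-Analysis.Analysis"
begin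

definition vabs :: "real^'n \<Rightarrow> real^'n" where
  "vabs x = (\<chi> i. \<bar>x $ i\<bar>)"

definition vpnorm :: "ereal \<Rightarrow> real^'n \<Rightarrow> real" where
  "vpnorm p x = (if p = \<infinity> then Max (range (\<lambda>i. \<bar>x $ i\<bar>))
                 else (\<Sum>i\<in>UNIV. \<bar>x $ i\<bar> powr real_of_ereal p) powr (1 / real_of_ereal p))"

definition opnorm_p :: "ereal \<Rightarrow> real^'n^'m \<Rightarrow> real" where
  "opnorm_p p M = Sup {vpnorm p (M *v x) / vpnorm p x | x. x \<noteq> 0}"

definition pinv :: "real^'n^'m \<Rightarrow> real^'m^'n" where
  "pinv M = (THE X. M ** X ** M = M \<and> X ** M ** X = X \<and>
                    transpose (M ** X) = M ** X \<and> transpose (X ** M) = X ** M)"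

end

(*
  Write P for pinv MA.  Full row rank of MA gives MA P = I, so every fixed point of
  T x = P (NA x + B |x| + b) solves Ax - B|x| = b.  Since ||x| - |y|| <= |x - y| componentwise
  and the p-norm is monotone in the moduli of the components, T is a contraction for the
  p-norm with constant ||P NA||_p + ||P B||_p < 1.  The p-norm is equivalent to the Euclidean
  norm, so Banach's fixed point theorem yields a unique fixed point.
*)
theory Submission
  imports Defs
begin

lemma powr_convex_combination_le:
  fixes u v l m q :: real
  assumes "0 \<le> u" "0 \<le> v" "0 \<le> l" "0 \<le> m" "l + m = 1" "1 \<le> q"
  shows "(l * u + m * v) powr q \<le> l * u powr q + m * v powr q"
proof -
  have powr_le_self: "t powr q \<le> t" if "0 \<le> t" "t \<le> 1" for t :: real
    using powr_mono'[of 1 q t] that assms(6) by simp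
  consider "u = 0" | "v = 0" | "u > 0" "v > 0" using assms by linarith
  then show ?thesis
  proof cases
    case 1
    then have "(l * u + m * v) powr q = m powr q * v powr q" by (simp add: powr_mult)
    also have "\<dots> \<le> m * v powr q" using powr_le_self[of m] assms by (intro mult_right_mono) auto
    finally show ?thesis using 1 assms by simp
  next
    case 2
    then have "(l * u + m * v) powr q = l powr q * u powr q" by (simp add: powr_mult)
    also have "\<dots> \<le> l * u powr q" using powr_le_self[of l] assms by (intro mult_right_mono) auto
    finally show ?thesis using 2 assms by simp
  next
    case 3
    have "((1 - m) * u + m * v) powr q \<le> (1 - m) * u powr q + m * v powr q"
      using convex_onD[OF powr_convex[OF assms(6)], of m u v] 3 assms by auto
    moreover have "l = 1 - m" using assms by simp
    ultimately show ?thesis by simp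
  qed
qed

definition lpnorm :: "real \<Rightarrow> real^'n \<Rightarrow> real" where
  "lpnorm q x = (\<Sum>i\<in>UNIV. \<bar>x $ i\<bar> powr q) powr (1 / q)"

lemma lpnorm_nonneg: "0 \<le> lpnorm q x"
  by (simp add: lpnorm_def)

lemma lpnorm_powr: "1 \<le> q \<Longrightarrow> lpnorm q x powr q = (\<Sum>i\<in>UNIV. \<bar>x $ i\<bar> powr q)"
  by (simp add: lpnorm_def powr_powr sum_nonneg)

lemma abs_component_le_lpnorm:
  assumes "1 \<le> q" shows "\<bar>x $ i\<bar> \<le> lpnorm q x"
proof -
  have "\<bar>x $ i\<bar> powr q \<le> (\<Sum>i\<in>UNIV. \<bar>x $ i\<bar> powr q)"
    by (rule member_le_sum) auto
  then have "(\<bar>x $ i\<bar> powr q) powr (1/q) \<le> lpnorm q x"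
    unfolding lpnorm_def using assms by (intro powr_mono2) auto
  then show ?thesis using assms by (simp add: powr_powr)
qed

lemma lpnorm_mono:
  "1 \<le> q \<Longrightarrow> (\<And>i. \<bar>x $ i\<bar> \<le> \<bar>y $ i\<bar>) \<Longrightarrow> lpnorm q x \<le> lpnorm q y"
  unfolding lpnorm_def by (intro powr_mono2 sum_mono sum_nonneg) auto

lemma lpnorm_scaleR: "1 \<le> q \<Longrightarrow> lpnorm q (c *\<^sub>R x) = \<bar>c\<bar> * lpnorm q x"
  by (simp add: lpnorm_def abs_mult powr_mult powr_powr sum_nonneg flip: sum_distrib_left)

lemma lpnorm_convex_combination_le_1:
  assumes q: "1 \<le> q" and "lpnorm q a = 1" "lpnorm q b = 1" "0 \<le> l" "0 \<le> m" "l + m = 1"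
  shows "lpnorm q (l *\<^sub>R a + m *\<^sub>R b) \<le> 1"
proof -
  have "lpnorm q (l *\<^sub>R a + m *\<^sub>R b) powr q
      \<le> (\<Sum>i\<in>UNIV. l * \<bar>a $ i\<bar> powr q + m * \<bar>b $ i\<bar> powr q)"
    unfolding lpnorm_powr[OF q]
  proof (rule sum_mono)
    fix i
    have "\<bar>(l *\<^sub>R a + m *\<^sub>R b) $ i\<bar> powr q \<le> (l * \<bar>a $ i\<bar> + m * \<bar>b $ i\<bar>) powr q"
      using assms by (intro powr_mono2) (auto simp: abs_mult intro!: abs_triangle_ineq[THEN order_trans])
    also have "\<dots> \<le> l * \<bar>a $ i\<bar> powr q + m * \<bar>b $ i\<bar> powr q"
      using assms by (intro powr_convex_combination_le) auto
    finally show "\<bar>(l *\<^sub>R a + m *\<^sub>R b) $ i\<bar> powr q \<le> \<dots>" .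
  qed
  also have "\<dots> = l * lpnorm q a powr q + m * lpnorm q b powr q"
    using q by (simp add: lpnorm_powr sum.distrib sum_distrib_left)
  also have "\<dots> = 1" using assms by simp
  finally have "lpnorm q (l *\<^sub>R a + m *\<^sub>R b) powr q \<le> 1" .
  then show ?thesis
    using q powr_less_mono2[of q 1 "lpnorm q (l *\<^sub>R a + m *\<^sub>R b)"] by (smt (verit) powr_one_eq_one)
qed

lemma lpnorm_eq_0_iff: "1 \<le> q \<Longrightarrow> lpnorm q x = 0 \<longleftrightarrow> x = 0"
  using abs_component_le_lpnorm[of q x] by (auto simp: vec_eq_iff lpnorm_def intro: antisym)

lemma lpnorm_triangle:
  assumes q: "1 \<le> q" shows "lpnorm q (x + y) \<le> lpnorm q x + lpnorm q y"
proof (cases "x = 0 \<or> y = 0")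
  case True then show ?thesis by (auto simp: lpnorm_def)
next
  case False
  define s t where "s = lpnorm q x" and "t = lpnorm q y"
  have "0 < s" "0 < t"
    using False lpnorm_eq_0_iff[OF q] lpnorm_nonneg unfolding s_def t_def
    by (metis less_eq_real_def)+
  \<comment> \<open>Normalise both vectors and use convexity of the unit ball.\<close>
  define a b where "a = (1 / s) *\<^sub>R x" and "b = (1 / t) *\<^sub>R y"
  have "lpnorm q ((s / (s + t)) *\<^sub>R a + (t / (s + t)) *\<^sub>R b) \<le> 1"
    using \<open>0 < s\<close> \<open>0 < t\<close>
    by (intro lpnorm_convex_combination_le_1 q)
       (simp_all add: a_def b_def s_def t_def lpnorm_scaleR[OF q] add_divide_distrib[symmetric])
  moreover have "x + y = (s + t) *\<^sub>R ((s / (s + t)) *\<^sub>R a + (t / (s + t)) *\<^sub>R b)"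
    using \<open>0 < s\<close> \<open>0 < t\<close> by (simp add: a_def b_def vec_eq_iff field_simps)
  ultimately show ?thesis
    using \<open>0 < s\<close> \<open>0 < t\<close> by (simp add: lpnorm_scaleR[OF q] s_def t_def)
qed

lemma lpnorm_le_card_norm:
  assumes q: "1 \<le> q" shows "lpnorm q (x :: real^'n) \<le> real CARD('n) * norm x"
proof -
  have "lpnorm q x \<le> (\<Sum>i\<in>(UNIV::'n set). norm x powr q) powr (1/q)"
    unfolding lpnorm_def using q
    by (intro powr_mono2 sum_mono sum_nonneg) (auto simp: component_le_norm_cart)
  also have "\<dots> = real CARD('n) powr (1/q) * norm x"
    using q by (simp add: powr_mult powr_powr)
  also have "\<dots> \<le> real CARD('n) * norm x"
  proof (rule mult_right_mono)
    show "real CARD('n) powr (1/q) \<le> real CARD('n)"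
      using powr_mono[of "1/q" 1 "real CARD('n)"] q by simp
  qed simp
  finally show ?thesis .
qed

definition linfnorm :: "real^'n \<Rightarrow> real" where
  "linfnorm x = Max (range (\<lambda>i. \<bar>x $ i\<bar>))"

lemma abs_component_le_linfnorm: "\<bar>x $ i\<bar> \<le> linfnorm x"
  unfolding linfnorm_def by (rule Max_ge) auto

lemma linfnorm_le: "(\<And>i. \<bar>x $ i\<bar> \<le> c) \<Longrightarrow> linfnorm x \<le> c"
  unfolding linfnorm_def by (subst Max_le_iff) auto

lemma linfnorm_eq_0_iff: "linfnorm x = 0 \<longleftrightarrow> x = 0"
proof
  show "linfnorm x = 0 \<Longrightarrow> x = 0"
    using abs_component_le_linfnorm[of x] by (metis abs_le_zero_iff vec_eq_iff zero_index)
qed (simp add: linfnorm_def)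

lemma linfnorm_mono: "(\<And>i. \<bar>x $ i\<bar> \<le> \<bar>y $ i\<bar>) \<Longrightarrow> linfnorm x \<le> linfnorm y"
  by (rule linfnorm_le) (metis abs_component_le_linfnorm order_trans)

lemma linfnorm_triangle: "linfnorm (x + y) \<le> linfnorm x + linfnorm y"
  by (rule linfnorm_le) (smt (verit) abs_component_le_linfnorm vector_add_component)

lemma linfnorm_le_norm: "linfnorm x \<le> norm x"
  by (rule linfnorm_le) (simp add: component_le_norm_cart)

lemma vpnorm_infinity: "vpnorm \<infinity> = linfnorm"
  by (simp add: vpnorm_def linfnorm_def fun_eq_iff)

lemma vpnorm_finite:
  assumes "1 \<le> p" "p \<noteq> \<infinity>"
  shows "1 \<le> real_of_ereal p" and "vpnorm p = lpnorm (real_of_ereal p)"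
  using assms by (cases p; simp add: vpnorm_def lpnorm_def fun_eq_iff)+

lemma abs_component_le_vpnorm: "1 \<le> p \<Longrightarrow> \<bar>x $ i\<bar> \<le> vpnorm p x"
  by (cases "p = \<infinity>")
     (auto simp: vpnorm_infinity vpnorm_finite abs_component_le_linfnorm abs_component_le_lpnorm)

lemma vpnorm_nonneg: "1 \<le> p \<Longrightarrow> 0 \<le> vpnorm p x"
  using abs_component_le_vpnorm[of p x] abs_ge_zero order_trans by metis

lemma vpnorm_eq_0_iff: "1 \<le> p \<Longrightarrow> vpnorm p x = 0 \<longleftrightarrow> x = 0"
  by (cases "p = \<infinity>") (simp_all add: vpnorm_infinity vpnorm_finite lpnorm_eq_0_iff linfnorm_eq_0_iff)

lemma vpnorm_pos: "1 \<le> p \<Longrightarrow> x \<noteq> 0 \<Longrightarrow> 0 < vpnorm p x"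
  using vpnorm_nonneg vpnorm_eq_0_iff by (metis less_eq_real_def)

lemma vpnorm_triangle: "1 \<le> p \<Longrightarrow> vpnorm p (x + y) \<le> vpnorm p x + vpnorm p y"
  by (cases "p = \<infinity>") (auto simp: vpnorm_infinity vpnorm_finite linfnorm_triangle lpnorm_triangle)

lemma vpnorm_mono: "1 \<le> p \<Longrightarrow> (\<And>i. \<bar>x $ i\<bar> \<le> \<bar>y $ i\<bar>) \<Longrightarrow> vpnorm p x \<le> vpnorm p y"
  by (cases "p = \<infinity>")
     (simp_all add: vpnorm_infinity vpnorm_finite lpnorm_mono linfnorm_mono)

lemma vpnorm_vabs_diff_le: "1 \<le> p \<Longrightarrow> vpnorm p (vabs x - vabs y) \<le> vpnorm p (x - y)"
  by (rule vpnorm_mono) (auto simp: vabs_def)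

lemma vpnorm_le_card_norm:
  assumes "1 \<le> p" shows "vpnorm p (x :: real^'n) \<le> real CARD('n) * norm x"
proof (cases "p = \<infinity>")
  case True
  have "linfnorm x \<le> 1 * norm x" by (simp add: linfnorm_le_norm)
  also have "\<dots> \<le> real CARD('n) * norm x" by (intro mult_right_mono) auto
  finally show ?thesis using True by (simp add: vpnorm_infinity)
qed (simp add: assms vpnorm_finite lpnorm_le_card_norm)

lemma norm_le_card_vpnorm:
  assumes "1 \<le> p" shows "norm (x :: real^'n) \<le> real CARD('n) * vpnorm p x"
proof -
  have "norm x \<le> (\<Sum>i\<in>UNIV. \<bar>x $ i\<bar>)" by (rule norm_le_l1_cart)
  also have "\<dots> \<le> (\<Sum>i\<in>(UNIV::'n set). vpnorm p x)" by (intro sum_mono abs_component_le_vpnorm assms)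
  finally show ?thesis by simp
qed

lemma bdd_above_opnorm_p_quotients:
  fixes M :: "real^'n^'m"
  assumes "1 \<le> p"
  shows "bdd_above {vpnorm p (M *v x) / vpnorm p x | x. x \<noteq> 0}"
proof (rule bdd_aboveI)
  fix v assume "v \<in> {vpnorm p (M *v x) / vpnorm p x | x. x \<noteq> 0}"
  then obtain y where "y \<noteq> 0" and v: "v = vpnorm p (M *v y) / vpnorm p y" by blast
  define K where "K = onorm ((*v) M)"
  have "0 \<le> K" unfolding K_def by (intro onorm_pos_le) simp
  have "vpnorm p (M *v y) \<le> real CARD('m) * norm (M *v y)" by (rule vpnorm_le_card_norm[OF assms])
  also have "\<dots> \<le> real CARD('m) * (K * norm y)"
    unfolding K_def by (intro mult_left_mono onorm) auto
  also have "\<dots> \<le> real CARD('m) * (K * (real CARD('n) * vpnorm p y))"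
    using \<open>0 \<le> K\<close> by (intro mult_left_mono norm_le_card_vpnorm[OF assms]) auto
  finally show "v \<le> real CARD('m) * K * real CARD('n)"
    using v vpnorm_pos[OF assms \<open>y \<noteq> 0\<close>] by (simp add: divide_le_eq mult_ac)
qed

lemma opnorm_p_nonneg:
  fixes M :: "real^'n^'m"
  assumes "1 \<le> p" shows "0 \<le> opnorm_p p M"
proof -
  have "axis undefined 1 \<noteq> (0 :: real^'n)" by (simp add: axis_eq_0_iff)
  then show ?thesis unfolding opnorm_p_def
    by (intro cSup_upper2[OF _ _ bdd_above_opnorm_p_quotients[OF assms]])
       (auto simp: vpnorm_nonneg[OF assms])
qed

lemma vpnorm_matrix_vector_mult_le:
  fixes M :: "real^'n^'m"
  assumes "1 \<le> p" shows "vpnorm p (M *v x) \<le> opnorm_p p M * vpnorm p x"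
proof (cases "x = 0")
  case True
  then show ?thesis
    using vpnorm_eq_0_iff[OF assms] by (metis mult_zero_right matrix_vector_mult_0_right order_refl)
next
  case False
  have "vpnorm p (M *v x) / vpnorm p x \<le> opnorm_p p M" unfolding opnorm_p_def
    by (rule cSup_upper[OF _ bdd_above_opnorm_p_quotients[OF assms]]) (use False in blast)
  then show ?thesis using vpnorm_pos[OF assms False] by (simp add: divide_le_eq)
qed

lemma moore_penrose_unique:
  fixes M :: "real^'n^'m" and X Y :: "real^'m^'n"
  assumes X: "M ** X ** M = M" "X ** M ** X = X" "transpose (M ** X) = M ** X" "transpose (X ** M) = X ** M"
  assumes Y: "M ** Y ** M = M" "Y ** M ** Y = Y" "transpose (M ** Y) = M ** Y" "transpose (Y ** M) = Y ** M"
  shows "X = Y"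
proof -
  have "X = X ** (M ** X)" using X(2) by (simp add: matrix_mul_assoc)
  also have "\<dots> = X ** transpose X ** transpose M"
    by (metis X(3) matrix_mul_assoc matrix_transpose_mul)
  also have "\<dots> = X ** transpose X ** transpose (M ** Y ** M)" using Y(1) by simp
  also have "\<dots> = X ** (transpose (M ** X) ** transpose (M ** Y))"
    by (simp add: matrix_transpose_mul matrix_mul_assoc)
  also have "\<dots> = X ** M ** Y" using X(2,3) Y(3) by (simp add: matrix_mul_assoc)
  finally have X_eq: "X = X ** M ** Y" .
  have "Y = (Y ** M) ** Y" using Y(2) by (simp add: matrix_mul_assoc)
  also have "\<dots> = transpose M ** transpose Y ** Y" using Y(4) by (metis matrix_transpose_mul)
  also have "\<dots> = transpose (M ** X ** M) ** transpose Y ** Y" using X(1) by simp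
  also have "\<dots> = (transpose (X ** M) ** transpose (Y ** M)) ** Y"
    by (simp add: matrix_transpose_mul matrix_mul_assoc)
  also have "\<dots> = X ** M ** Y" using X(4) Y(2,4) by (metis matrix_mul_assoc)
  finally show ?thesis using X_eq by simp
qed

lemma pinv_eqI:
  fixes M :: "real^'n^'m"
  assumes "M ** X ** M = M" "X ** M ** X = X" "transpose (M ** X) = M ** X" "transpose (X ** M) = X ** M"
  shows "pinv M = X"
  unfolding pinv_def using assms moore_penrose_unique[of M _ X] by (intro the_equality) blast+

lemma full_row_rank_gram_kernel:
  fixes M :: "real^'n^'m"
  assumes "rank M = CARD('m)" and "(M ** transpose M) *v y = 0"
  shows "y = 0"
proof -
  have "(transpose M *v y) \<bullet> (transpose M *v y) = y \<bullet> ((M ** transpose M) *v y)"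
    by (metis dot_lmul_matrix matrix_vector_mul_assoc transpose_transpose vector_transpose_matrix)
  then have "transpose M *v y = transpose M *v 0" using assms(2) by simp
  moreover have "inj ((*v) (transpose M))"
    using assms(1) by (metis full_rank_injective rank_transpose)
  ultimately show ?thesis by (meson injD)
qed

lemma matrix_mul_pinv_full_row_rank:
  fixes M :: "real^'n^'m"
  assumes "rank M = CARD('m)"
  shows "M ** pinv M = mat 1"
proof -
  let ?S = "M ** transpose M"
  obtain G where "G ** ?S = mat 1"
    using full_row_rank_gram_kernel[OF assms] matrix_left_invertible_ker by blast
  then have SG: "?S ** G = mat 1" using matrix_left_right_inverse by blast
  have "transpose G ** ?S = mat 1"
    using SG by (metis matrix_transpose_mul transpose_mat transpose_transpose)
  then have G_sym: "transpose G = G"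
    by (metis SG matrix_mul_assoc matrix_mul_lid matrix_mul_rid)
  define X where "X = transpose M ** G"
  have MX: "M ** X = mat 1" unfolding X_def using SG by (simp add: matrix_mul_assoc)
  have "pinv M = X"
  proof (rule pinv_eqI)
    show "M ** X ** M = M" "transpose (M ** X) = M ** X" using MX by (simp_all add: transpose_mat)
    show "X ** M ** X = X" using MX by (metis matrix_mul_assoc matrix_mul_rid)
    show "transpose (X ** M) = X ** M"
      unfolding X_def by (simp add: matrix_transpose_mul G_sym matrix_mul_assoc)
  qed
  then show ?thesis using MX by simp
qed

lemma ex1_fixed_point_funpow:
  assumes "\<exists>!x. (f ^^ k) x = x"
  shows "\<exists>!x. f x = x"
proof -
  obtain z where z: "(f ^^ k) z = z" and unique: "\<And>y. (f ^^ k) y = y \<Longrightarrow> y = z"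
    using assms by blast
  have "(f ^^ k) (f z) = f z" by (metis z funpow_swap1)
  then have "f z = z" by (rule unique)
  moreover have "(f ^^ k) y = y" if "f y = y" for y
    using that by (induction k) auto
  ultimately show ?thesis using unique by blast
qed

text \<open>A high enough iterate of \<open>T\<close> is a contraction for the norm itself.\<close>
lemma banach_fix_equivalent_norm:
  fixes T :: "'a::banach \<Rightarrow> 'a" and N :: "'a \<Rightarrow> real"
  assumes "0 \<le> c" "c < 1"
    and contraction: "\<And>x y. N (T x - T y) \<le> c * N (x - y)"
    and lower: "\<And>x. norm x \<le> K * N x" and upper: "\<And>x. N x \<le> L * norm x"
    and "0 < K" "0 < L"
  shows "\<exists>!x. T x = x"
proof -
  have iterate: "N ((T ^^ k) x - (T ^^ k) y) \<le> c ^ k * N (x - y)" for k x y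
  proof (induction k)
    case (Suc k)
    have "N ((T ^^ Suc k) x - (T ^^ Suc k) y) \<le> c * N ((T ^^ k) x - (T ^^ k) y)"
      using contraction by simp
    also have "\<dots> \<le> c * (c ^ k * N (x - y))" using Suc \<open>0 \<le> c\<close> by (rule mult_left_mono)
    finally show ?case by (simp add: mult_ac)
  qed simp
  obtain k where k: "c ^ k < 1 / (2 * (K * L))"
    using real_arch_pow_inv[of "1 / (2 * (K * L))" c] assms by auto
  have "dist ((T ^^ k) x) ((T ^^ k) y) \<le> 1/2 * dist x y" for x y
  proof -
    have "dist ((T ^^ k) x) ((T ^^ k) y) \<le> K * N ((T ^^ k) x - (T ^^ k) y)"
      unfolding dist_norm by (rule lower)
    also have "\<dots> \<le> K * (c ^ k * N (x - y))"
      using iterate \<open>0 < K\<close> by (intro mult_left_mono) auto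
    also have "\<dots> \<le> K * (c ^ k * (L * dist x y))"
      using upper[of "x - y"] assms by (intro mult_left_mono) (auto simp: dist_norm)
    also have "\<dots> = (K * L * c ^ k) * dist x y" by (simp add: mult_ac)
    also have "\<dots> \<le> 1/2 * dist x y"
      using k assms by (intro mult_right_mono) (auto simp: field_simps)
    finally show ?thesis .
  qed
  then have "\<exists>!x. (T ^^ k) x = x" by (intro banach_fix_type[of "1/2"]) auto
  then show ?thesis by (rule ex1_fixed_point_funpow)
qed

lemma vpnorm_abs_affine_contraction:
  fixes C D :: "real^'n^'n"
  assumes "1 \<le> p"
  shows "vpnorm p ((C *v x + D *v vabs x + b) - (C *v y + D *v vabs y + b))
           \<le> (opnorm_p p C + opnorm_p p D) * vpnorm p (x - y)"
proof -
  have "(C *v x + D *v vabs x + b) - (C *v y + D *v vabs y + b) = C *v (x - y) + D *v (vabs x - vabs y)"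
    by (simp add: matrix_vector_mult_diff_distrib)
  also have "vpnorm p \<dots> \<le> opnorm_p p C * vpnorm p (x - y) + opnorm_p p D * vpnorm p (vabs x - vabs y)"
    using assms by (intro vpnorm_triangle[THEN order_trans] add_mono vpnorm_matrix_vector_mult_le)
  also have "\<dots> \<le> opnorm_p p C * vpnorm p (x - y) + opnorm_p p D * vpnorm p (x - y)"
    using assms by (intro add_mono mult_left_mono opnorm_p_nonneg vpnorm_vabs_diff_le) auto
  finally show ?thesis by (simp add: algebra_simps)
qed

lemma ex1_fixed_point_abs_affine:
  fixes C D :: "real^'n^'n"
  assumes "1 \<le> p" and "opnorm_p p C + opnorm_p p D < 1"
  shows "\<exists>!x. C *v x + D *v vabs x + d = x"
proof (rule banach_fix_equivalent_norm)
  show "vpnorm p ((C *v x + D *v vabs x + d) - (C *v y + D *v vabs y + d))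
          \<le> (opnorm_p p C + opnorm_p p D) * vpnorm p (x - y)" for x y
    by (rule vpnorm_abs_affine_contraction[OF assms(1)])
  show "norm x \<le> real CARD('n) * vpnorm p x" for x :: "real^'n"
    by (rule norm_le_card_vpnorm[OF assms(1)])
  show "vpnorm p x \<le> real CARD('n) * norm x" for x :: "real^'n"
    by (rule vpnorm_le_card_norm[OF assms(1)])
  show "0 \<le> opnorm_p p C + opnorm_p p D"
    using assms(1) by (intro add_nonneg_nonneg opnorm_p_nonneg)
qed (use assms(2) in auto)

lemma pinv_fixed_point_solves:
  fixes MA NA B :: "real^'n^'m"
  assumes "rank MA = CARD('m)" and "x = pinv MA *v (NA *v x + B *v vabs x + b)"
  shows "(MA - NA) *v x - B *v vabs x = b"
proof -
  have "MA *v x = (MA ** pinv MA) *v (NA *v x + B *v vabs x + b)"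
    using assms(2) by (metis matrix_vector_mul_assoc)
  then have "MA *v x = NA *v x + B *v vabs x + b"
    by (simp add: matrix_mul_pinv_full_row_rank[OF assms(1)])
  then show ?thesis by (simp add: matrix_vector_mult_diff_rdistrib)
qed

theorem theorem3p1:
  fixes A B MA NA :: "real^'n^'m" and p :: ereal and b :: "real^'m"
  assumes "CARD('m) < CARD('n)"
    and "1 \<le> p"
    and "A = MA - NA"
    and "rank MA = CARD('m)"
    and "opnorm_p p (pinv MA ** NA) + opnorm_p p (pinv MA ** B) < 1"
  shows "(\<exists>!x. x = pinv MA *v (NA *v x + B *v vabs x + b)) \<and>
         (\<forall>x. x = pinv MA *v (NA *v x + B *v vabs x + b) \<longrightarrow> A *v x - B *v vabs x = b)"
proof
  have "pinv MA *v (NA *v x + B *v vabs x + b)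
          = (pinv MA ** NA) *v x + (pinv MA ** B) *v vabs x + pinv MA *v b" for x
    by (simp add: matrix_vector_mul_assoc matrix_vector_right_distrib)
  then show "\<exists>!x. x = pinv MA *v (NA *v x + B *v vabs x + b)"
    using ex1_fixed_point_abs_affine[OF assms(2,5)] by metis
  show "\<forall>x. x = pinv MA *v (NA *v x + B *v vabs x + b) \<longrightarrow> A *v x - B *v vabs x = b"
    using pinv_fixed_point_solves[OF assms(4)] assms(3) by blast
qed

end
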